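(* Let $X$ be a metric space with an accumulation point. Then: (i) there is a sequence $x\in X^{[\omega]^2}$ with $\Lambda_x(\mathsf{r})\neq\Gamma_x(\mathsf{r})$; (ii) there is a sequence $x\in X^{[\omega]^2}$ such that $\Lambda_x(\mathsf{r})$ is not closed; (iii) if $X$ is locally compact, then for every $x\in X^{[\omega]^2}$ each isolated point of $\Gamma_x(\mathsf{r})$ belongs to $\Lambda_x(\mathsf{r})$. Similarly: (i$'$) there is a sequence $x\in X^{\omega}$ with $\Lambda_x(\mathrm{FS})\neq\Gamma_x(\mathrm{FS})$; (ii$'$) there is a sequence $x\in X^{\omega}$ such that $\Lambda_x(\mathrm{FS})$ is not closed; (iii$'$) if $X$ is locally compact, then for every $x\in X^{\omega}$ each isolated point of $\Gamma_x(\mathrm{FS})$ belongs to $\Lambda_x(\mathrm{FS})$.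
   Context: $\omega$ is the set of nonnegative integers, $[D]^2$ the 2-element subsets of $D$, $[D]^\omega$ the infinite subsets. Let $\mathsf{r}:[\omega]^\omega\to[[\omega]^2]^\omega$, $\mathsf{r}(D)=[D]^2$, and $\mathrm{FS}:[\omega]^\omega\to[\omega]^\omega$, $\mathrm{FS}(D)=\{\sum_{n\in\alpha}n:\alpha\subseteq D\text{ finite nonempty}\}$. For $\rho\in\{\mathsf{r},\mathrm{FS}\}$ with domain $[\omega]^\omega$ and codomain consisting of infinite subsets of $\Psi$ (where $\Psi=[\omega]^2$ for $\mathsf{r}$, $\Psi=\omega$ for $\mathrm{FS}$), and a sequence $x:\Psi\to X$: $\Gamma_x(\rho)$ is the set of $\eta\in X$ such that for every neighborhood $U$ of $\eta$ there is an infinite $F\subseteq\omega$ with $\rho(F)\subseteq\{s\in\Psi:x_s\in U\}$; $\Lambda_x(\rho)$ is the set of $\eta\in X$ for which there is an infinite $F\subseteq\omega$ such that for every neighborhood $U$ of $\eta$ there is a finite $K\subseteq\omega$ with $x_s\in U$ for all $s\in\rho(F\setminus K)$. *)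

theory Defs
  imports "HOL-Analysis.Analysis"
begin

text \<open>[D]^2: the 2-element subsets of D.  r(D) = [D]^2.\<close>
definition pairs :: "nat set \<Rightarrow> nat set set" where
  "pairs D = {s. s \<subseteq> D \<and> card s = 2}"

definition FS :: "nat set \<Rightarrow> nat set" where
  "FS D = {\<Sum>\<alpha> | \<alpha>. \<alpha> \<subseteq> D \<and> finite \<alpha> \<and> \<alpha> \<noteq> {}}"

definition Gamma :: "(nat set \<Rightarrow> 'b set) \<Rightarrow> ('b \<Rightarrow> 'a::topological_space) \<Rightarrow> 'a set" where
  "Gamma \<rho> x = {\<eta>. \<forall>U. open U \<and> \<eta> \<in> U \<longrightarrow>
      (\<exists>F. infinite F \<and> \<rho> F \<subseteq> {s. x s \<in> U})}"

definition Lambda :: "(nat set \<Rightarrow> 'b set) \<Rightarrow> ('b \<Rightarrow> 'a::topological_space) \<Rightarrow> 'a set" where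
  "Lambda \<rho> x = {\<eta>. \<exists>F. infinite F \<and> (\<forall>U. open U \<and> \<eta> \<in> U \<longrightarrow>
      (\<exists>K. finite K \<and> (\<forall>s \<in> \<rho> (F - K). x s \<in> U)))}"

end

theory Submission
  imports Defs
begin

(*
  Parts (i), (ii) and their FS versions: take y n --> p with y n ~= p, a point z ~= p, and split
  nat into infinitely many infinite rows.  Let x send a finite set of indices (for FS: the set of
  binary digits of a number) to y n if it lies inside row n, and to z otherwise.  Every row
  witnesses y n in Lambda, hence p in Gamma.  But p is not in Lambda: along a Lambda-witness F the
  values eventually avoid z, which puts a tail of F into a single row n; then the values are y n,
  which they must eventually avoid as well.  So Lambda differs from Gamma and misses its limit
  point p.

  Parts (iii): for every infinite D there is an ultrafilter P containing rho(D) that diagonalizes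
  rho, i.e. every decreasing sequence of members of P contains the sets rho(F - K m) for a single
  infinite F.  For pairs, P is the square of a nonprincipal ultrafilter on nat; for FS, P is an
  idempotent ultrafilter (Ellis-Numakura) and diagonalization is the Galvin-Glazer proof of
  Hindman's theorem.  If eta is isolated in Gamma, pick a compact neighbourhood C of eta meeting
  Gamma only at eta, and P for a Gamma-witness D of a neighbourhood inside C.  Covering C - U by
  finitely many open sets without Gamma-witnesses shows that x^-1(U) is in P for every
  neighbourhood U of eta, and diagonalizing the balls around eta gives one Lambda-witness.
*)

section \<open>Ultrafilters\<close>

definition ultrafilter :: "'a set set \<Rightarrow> bool" where
  "ultrafilter U \<longleftrightarrow> {} \<notin> U \<and> (\<forall>A\<in>U. \<forall>B\<in>U. A \<inter> B \<in> U)
     \<and> (\<forall>A\<in>U. \<forall>B. A \<subseteq> B \<longrightarrow> B \<in> U) \<and> (\<forall>A. A \<in> U \<or> - A \<in> U)"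

definition finite_intersection_property :: "'a set set \<Rightarrow> bool" where
  "finite_intersection_property G \<longleftrightarrow> (\<forall>H. finite H \<longrightarrow> H \<subseteq> G \<longrightarrow> \<Inter>H \<noteq> {})"

context
  fixes U :: "'a set set"
  assumes U: "ultrafilter U"
begin

lemma ultrafilter_empty: "{} \<notin> U"
  using U unfolding ultrafilter_def by blast

lemma ultrafilter_Int: "A \<in> U \<Longrightarrow> B \<in> U \<Longrightarrow> A \<inter> B \<in> U"
  using U unfolding ultrafilter_def by blast

lemma ultrafilter_mono: "A \<in> U \<Longrightarrow> A \<subseteq> B \<Longrightarrow> B \<in> U"
  using U unfolding ultrafilter_def by blast

lemma ultrafilter_Int_iff: "A \<inter> B \<in> U \<longleftrightarrow> A \<in> U \<and> B \<in> U"
  by (meson Int_lower1 Int_lower2 ultrafilter_Int ultrafilter_mono)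

lemma ultrafilter_Compl_iff: "- A \<in> U \<longleftrightarrow> A \<notin> U"
proof
  assume "- A \<in> U"
  then show "A \<notin> U" using ultrafilter_Int[of A "- A"] ultrafilter_empty by auto
next
  show "A \<notin> U \<Longrightarrow> - A \<in> U" using U unfolding ultrafilter_def by blast
qed

lemma ultrafilter_Un_iff: "A \<union> B \<in> U \<longleftrightarrow> A \<in> U \<or> B \<in> U"
proof
  assume AB: "A \<union> B \<in> U"
  show "A \<in> U \<or> B \<in> U"
  proof (rule ccontr)
    assume "\<not> (A \<in> U \<or> B \<in> U)"
    then have "(A \<union> B) \<inter> (- A \<inter> - B) \<in> U"
      using AB by (simp add: ultrafilter_Int ultrafilter_Compl_iff)
    then show False using ultrafilter_empty by (simp add: Int_Un_distrib2)
  qed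
qed (auto intro: ultrafilter_mono)

lemma ultrafilter_UN_imp_ex:
  assumes "finite Y" "(\<Union>y\<in>Y. G y) \<in> U"
  shows "\<exists>y\<in>Y. G y \<in> U"
  using assms by (induction Y rule: finite_induct) (auto simp: ultrafilter_empty ultrafilter_Un_iff)

lemma ultrafilter_Inter: "finite H \<Longrightarrow> H \<subseteq> U \<Longrightarrow> \<Inter>H \<in> U"
proof (induction H rule: finite_induct)
  case empty
  show ?case using U ultrafilter_Compl_iff[of "{}"] by (simp add: ultrafilter_empty)
qed (simp add: ultrafilter_Int)

lemma ultrafilter_finite_intersection_property: "finite_intersection_property U"
  unfolding finite_intersection_property_def using ultrafilter_Inter ultrafilter_empty by metis

end

lemma ultrafilter_subset_eq:
  assumes "ultrafilter U" "ultrafilter V" "U \<subseteq> V"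
  shows "U = V"
proof (intro subset_antisym subsetI)
  fix A assume "A \<in> V"
  then have "- A \<notin> V" using ultrafilter_Compl_iff[OF assms(2)] by simp
  then show "A \<in> U" using ultrafilter_Compl_iff[OF assms(1)] assms(3) by blast
qed (use assms in blast)

lemma finite_intersection_property_subset:
  "finite_intersection_property G \<Longrightarrow> H \<subseteq> G \<Longrightarrow> finite_intersection_property H"
  unfolding finite_intersection_property_def by blast

lemma finite_intersection_property_insert:
  assumes "finite_intersection_property G"
  shows "finite_intersection_property (insert B G) \<longleftrightarrow>
    (\<forall>H. finite H \<longrightarrow> H \<subseteq> G \<longrightarrow> B \<inter> \<Inter>H \<noteq> {})"
proof
  assume B: "\<forall>H. finite H \<longrightarrow> H \<subseteq> G \<longrightarrow> B \<inter> \<Inter>H \<noteq> {}"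
  show "finite_intersection_property (insert B G)"
    unfolding finite_intersection_property_def
  proof (intro allI impI)
    fix H assume H: "finite H" "H \<subseteq> insert B G"
    show "\<Inter>H \<noteq> {}"
    proof (cases "B \<in> H")
      case True
      then have "\<Inter>H = B \<inter> \<Inter>(H - {B})" by blast
      moreover have "finite (H - {B})" "H - {B} \<subseteq> G" using H by auto
      ultimately show ?thesis using B by simp
    next
      case False
      then have "H \<subseteq> G" using H(2) by blast
      then show ?thesis using assms H(1) unfolding finite_intersection_property_def by simp
    qed
  qed
next
  assume "finite_intersection_property (insert B G)"
  then have "\<Inter>(insert B H) \<noteq> {}" if "finite H" "H \<subseteq> G" for H
    using that unfolding finite_intersection_property_def by blast
  then show "\<forall>H. finite H \<longrightarrow> H \<subseteq> G \<longrightarrow> B \<inter> \<Inter>H \<noteq> {}"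
    by simp
qed

lemma maximal_finite_intersection_property_imp_ultrafilter:
  assumes fip: "finite_intersection_property M"
    and maximal: "\<And>B. finite_intersection_property (insert B M) \<Longrightarrow> B \<in> M"
  shows "ultrafilter M"
  unfolding ultrafilter_def
proof (intro conjI ballI allI impI)
  note fip_insert = finite_intersection_property_insert[OF fip]
  have Inter_M: "\<Inter>H \<noteq> {}" if "finite H" "H \<subseteq> M" for H
    using fip that unfolding finite_intersection_property_def by blast
  show "{} \<notin> M"
    using Inter_M[of "{{}}"] by auto
  show "A \<inter> B \<in> M" if "A \<in> M" "B \<in> M" for A B
  proof (rule maximal)
    have "A \<inter> B \<inter> \<Inter>H \<noteq> {}" if "finite H" "H \<subseteq> M" for H
      using Inter_M[of "insert A (insert B H)"] that \<open>A \<in> M\<close> \<open>B \<in> M\<close> by (simp add: Int_assoc)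
    then show "finite_intersection_property (insert (A \<inter> B) M)"
      by (simp add: fip_insert)
  qed
  show "B \<in> M" if "A \<in> M" "A \<subseteq> B" for A B
  proof (rule maximal)
    have "B \<inter> \<Inter>H \<noteq> {}" if "finite H" "H \<subseteq> M" for H
      using Inter_M[of "insert A H"] that \<open>A \<in> M\<close> \<open>A \<subseteq> B\<close> by auto
    then show "finite_intersection_property (insert B M)"
      by (simp add: fip_insert)
  qed
  show "A \<in> M \<or> - A \<in> M" for A
  proof (rule ccontr)
    assume "\<not> (A \<in> M \<or> - A \<in> M)"
    then obtain H1 H2 where H: "finite H1" "H1 \<subseteq> M" "A \<inter> \<Inter>H1 = {}"
      "finite H2" "H2 \<subseteq> M" "- A \<inter> \<Inter>H2 = {}"
      using maximal fip_insert by meson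
    have "\<Inter>(H1 \<union> H2) \<subseteq> (A \<inter> \<Inter>H1) \<union> (- A \<inter> \<Inter>H2)" by blast
    then have "\<Inter>(H1 \<union> H2) = {}" using H by blast
    then show False using Inter_M H by blast
  qed
qed

lemma finite_intersection_property_Union_chain:
  assumes "C \<noteq> {}" "subset.chain A C" "\<And>M. M \<in> C \<Longrightarrow> finite_intersection_property M"
  shows "finite_intersection_property (\<Union>C)"
  unfolding finite_intersection_property_def
proof (intro allI impI)
  fix H assume H: "finite H" "H \<subseteq> \<Union>C"
  obtain M where "M \<in> C" "H \<subseteq> M" using finite_subset_Union_chain[OF H assms(1,2)] .
  then have "finite_intersection_property M" "H \<subseteq> M" using assms(3) by blast+
  then show "\<Inter>H \<noteq> {}" using H(1) unfolding finite_intersection_property_def by blast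
qed

lemma ultrafilter_exists:
  assumes "finite_intersection_property G"
  shows "\<exists>U. ultrafilter U \<and> G \<subseteq> U"
proof -
  let ?S = "{M. G \<subseteq> M \<and> finite_intersection_property M}"
  have "\<forall>C\<in>chains ?S. \<exists>M\<in>?S. \<forall>X\<in>C. X \<subseteq> M"
  proof
    fix C assume C: "C \<in> chains ?S"
    show "\<exists>M\<in>?S. \<forall>X\<in>C. X \<subseteq> M"
    proof (cases "C = {}")
      case True
      have "G \<in> ?S" using assms by simp
      then show ?thesis using True by blast
    next
      case False
      have CS: "C \<subseteq> ?S" using chainsD2[OF C] .
      have "subset.chain ?S C" using C by (simp add: chains_alt_def)
      then have "finite_intersection_property (\<Union>C)"
        using finite_intersection_property_Union_chain[OF False] CS by blast
      moreover obtain M where "M \<in> C" using False by blast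
      then have "G \<subseteq> \<Union>C" using CS by blast
      ultimately have "\<Union>C \<in> ?S" by simp
      then show ?thesis by blast
    qed
  qed
  from Zorn_Lemma2[OF this] obtain M where M: "M \<in> ?S" and max: "\<forall>X\<in>?S. M \<subseteq> X \<longrightarrow> X = M"
    by blast
  have maximal: "B \<in> M" if "finite_intersection_property (insert B M)" for B
  proof -
    have "insert B M \<in> ?S" using M that by auto
    then have "insert B M = M" using max[rule_format, of "insert B M"] by blast
    then show ?thesis by blast
  qed
  have "ultrafilter M"
    using maximal_finite_intersection_property_imp_ultrafilter[of M] M maximal by simp
  then show ?thesis using M by blast
qed

section \<open>Sums of ultrafilters and idempotents\<close>

(* The image of U x V under f.  For f = (+) this is the sum of ultrafilters in the Stone-Cech
   compactification; for f = (\<lambda>i j. {i, j}) and V = U it is the square of U on pairs. *)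
definition ultrafilter_map2 :: "('a \<Rightarrow> 'b \<Rightarrow> 'c) \<Rightarrow> 'a set set \<Rightarrow> 'b set set \<Rightarrow> 'c set set" where
  "ultrafilter_map2 f U V = {C. {a. {b. f a b \<in> C} \<in> V} \<in> U}"

lemma ultrafilter_ultrafilter_map2:
  assumes U: "ultrafilter U" and V: "ultrafilter V"
  shows "ultrafilter (ultrafilter_map2 f U V)"
proof -
  define sec where "sec C = {a. {b. f a b \<in> C} \<in> V}" for C
  have sec_Int: "sec (C \<inter> D) = sec C \<inter> sec D" for C D
  proof -
    have "{b. f a b \<in> C \<inter> D} = {b. f a b \<in> C} \<inter> {b. f a b \<in> D}" for a by auto
    then show ?thesis by (auto simp: sec_def ultrafilter_Int_iff[OF V])
  qed
  have sec_Compl: "sec (- C) = - sec C" for C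
  proof -
    have "{b. f a b \<in> - C} = - {b. f a b \<in> C}" for a by auto
    then show ?thesis by (auto simp: sec_def ultrafilter_Compl_iff[OF V])
  qed
  have sec_empty: "sec {} = {}"
    using ultrafilter_empty[OF V] by (simp add: sec_def)
  have sec_mono: "sec C \<subseteq> sec D" if "C \<subseteq> D" for C D
  proof -
    have "sec C = sec C \<inter> sec D" using that sec_Int[of C D] by (simp add: Int_absorb2)
    then show ?thesis by blast
  qed
  have map2: "ultrafilter_map2 f U V = {C. sec C \<in> U}"
    by (simp add: ultrafilter_map2_def sec_def)
  show ?thesis
    unfolding map2 ultrafilter_def
  proof (intro conjI ballI allI impI)
    show "{} \<notin> {C. sec C \<in> U}" using ultrafilter_empty[OF U] by (simp add: sec_empty)
    show "C \<inter> D \<in> {C. sec C \<in> U}" if "C \<in> {C. sec C \<in> U}" "D \<in> {C. sec C \<in> U}" for C D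
      using that by (simp add: sec_Int ultrafilter_Int[OF U])
    show "D \<in> {C. sec C \<in> U}" if "C \<in> {C. sec C \<in> U}" "C \<subseteq> D" for C D
      using that ultrafilter_mono[OF U, of "sec C" "sec D"] sec_mono[of C D] by simp
    show "C \<in> {C. sec C \<in> U} \<or> - C \<in> {C. sec C \<in> U}" for C
      by (simp add: sec_Compl ultrafilter_Compl_iff[OF U])
  qed
qed

abbreviation ultrafilter_plus :: "'a::plus set set \<Rightarrow> 'a set set \<Rightarrow> 'a set set" where
  "ultrafilter_plus \<equiv> ultrafilter_map2 (+)"

lemma ultrafilter_plus_assoc:
  fixes U V W :: "'a::semigroup_add set set"
  shows "ultrafilter_plus (ultrafilter_plus U V) W = ultrafilter_plus U (ultrafilter_plus V W)"
  by (simp add: ultrafilter_map2_def add.assoc)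

(* The closed subsets of the Stone-Cech compactification are exactly the sets
   ultrafilters_containing G. *)
definition ultrafilters_containing :: "'a set set \<Rightarrow> 'a set set set" where
  "ultrafilters_containing G = {U. ultrafilter U \<and> G \<subseteq> U}"

definition closed_under_plus :: "'a::plus set set set \<Rightarrow> bool" where
  "closed_under_plus S \<longleftrightarrow> (\<forall>U\<in>S. \<forall>V\<in>S. ultrafilter_plus U V \<in> S)"

lemma ultrafilters_containing_nonempty_iff:
  "ultrafilters_containing G \<noteq> {} \<longleftrightarrow> finite_intersection_property G"
proof
  assume "ultrafilters_containing G \<noteq> {}"
  then obtain U where "ultrafilter U" "G \<subseteq> U" by (auto simp: ultrafilters_containing_def)
  then show "finite_intersection_property G"
    using ultrafilter_finite_intersection_property finite_intersection_property_subset by blast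
next
  assume "finite_intersection_property G"
  then obtain U where "ultrafilter U" "G \<subseteq> U" using ultrafilter_exists by blast
  then show "ultrafilters_containing G \<noteq> {}" by (auto simp: ultrafilters_containing_def)
qed

lemma finite_intersection_property_translates:
  assumes V: "ultrafilter V" and W: "ultrafilter W"
    and cover: "\<And>A. A \<in> W \<Longrightarrow> \<exists>U\<in>ultrafilters_containing G. A \<in> ultrafilter_plus U V"
  shows "finite_intersection_property (G \<union> (\<lambda>A. {a. {b. a + b \<in> A} \<in> V}) ` W)"
    (is "finite_intersection_property (G \<union> ?sec ` W)")
  unfolding finite_intersection_property_def
proof (intro allI impI)
  fix H assume H: "finite H" "H \<subseteq> G \<union> ?sec ` W"
  then obtain R where R: "R \<subseteq> W" "finite R" "H - G = ?sec ` R"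
    using finite_subset_image[of "H - G" ?sec W] by blast
  have "\<Inter>R \<in> W" using ultrafilter_Inter[OF W] R by blast
  then obtain U where U: "ultrafilter U" "G \<subseteq> U" "?sec (\<Inter>R) \<in> U"
    using cover unfolding ultrafilters_containing_def ultrafilter_map2_def by blast
  have "?sec A \<in> U" if "A \<in> R" for A
  proof (rule ultrafilter_mono[OF U(1) U(3)], intro subsetI CollectI)
    fix a assume "a \<in> ?sec (\<Inter>R)"
    moreover have "{b. a + b \<in> \<Inter>R} \<subseteq> {b. a + b \<in> A}" using that by auto
    ultimately show "{b. a + b \<in> A} \<in> V" using ultrafilter_mono[OF V] by blast
  qed
  moreover have "H \<subseteq> G \<union> ?sec ` R" using R(3) H(2) by blast
  ultimately have "H \<subseteq> U" using U(2) by blast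
  then have "\<Inter>H \<in> U" using ultrafilter_Inter[OF U(1) H(1)] by simp
  then show "\<Inter>H \<noteq> {}" using ultrafilter_empty[OF U(1)] by auto
qed

(* Right translation by V is continuous on the Stone-Cech compactification, so it maps closed
   sets onto closed sets. *)
lemma image_ultrafilter_plus_right:
  assumes V: "ultrafilter V"
  shows "(\<lambda>U. ultrafilter_plus U V) ` ultrafilters_containing G =
    ultrafilters_containing {A. \<forall>U\<in>ultrafilters_containing G. A \<in> ultrafilter_plus U V}"
    (is "?image = ultrafilters_containing ?N")
proof (intro subset_antisym subsetI)
  fix W assume "W \<in> ?image"
  then show "W \<in> ultrafilters_containing ?N"
    using ultrafilter_ultrafilter_map2[OF _ V] by (auto simp: ultrafilters_containing_def)
next
  fix W assume W: "W \<in> ultrafilters_containing ?N"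
  then have uW: "ultrafilter W" by (simp add: ultrafilters_containing_def)
  have "\<exists>U\<in>ultrafilters_containing G. A \<in> ultrafilter_plus U V" if A: "A \<in> W" for A
  proof (rule ccontr)
    assume none: "\<not> ?thesis"
    have "- A \<in> ultrafilter_plus U V" if "U \<in> ultrafilters_containing G" for U
    proof -
      have "ultrafilter (ultrafilter_plus U V)"
        using that by (intro ultrafilter_ultrafilter_map2[OF _ V]) (simp add: ultrafilters_containing_def)
      then show ?thesis using none that ultrafilter_Compl_iff by blast
    qed
    then have "- A \<in> W" using W by (auto simp: ultrafilters_containing_def)
    then show False using A ultrafilter_Compl_iff[OF uW] by blast
  qed
  then obtain U where U: "ultrafilter U" "G \<union> (\<lambda>A. {a. {b. a + b \<in> A} \<in> V}) ` W \<subseteq> U"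
    using ultrafilter_exists finite_intersection_property_translates[OF V uW] by blast
  then have "W \<subseteq> ultrafilter_plus U V"
    by (auto simp: ultrafilter_map2_def)
  then have "W = ultrafilter_plus U V"
    by (rule ultrafilter_subset_eq[OF uW ultrafilter_ultrafilter_map2[OF U(1) V]])
  moreover have "U \<in> ultrafilters_containing G" using U by (simp add: ultrafilters_containing_def)
  ultimately show "W \<in> ?image" by blast
qed

lemma ultrafilters_containing_fixing:
  assumes E: "ultrafilter E"
  shows "{U \<in> ultrafilters_containing G. ultrafilter_plus U E = E} =
    ultrafilters_containing (G \<union> {{a. {b. a + b \<in> A} \<in> E} | A. A \<in> E})"
proof (intro subset_antisym subsetI)
  fix U assume "U \<in> {U \<in> ultrafilters_containing G. ultrafilter_plus U E = E}"
  then show "U \<in> ultrafilters_containing (G \<union> {{a. {b. a + b \<in> A} \<in> E} | A. A \<in> E})"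
    by (auto simp: ultrafilters_containing_def ultrafilter_map2_def)
next
  fix U assume U: "U \<in> ultrafilters_containing (G \<union> {{a. {b. a + b \<in> A} \<in> E} | A. A \<in> E})"
  then have uU: "ultrafilter U" and sub: "E \<subseteq> ultrafilter_plus U E"
    by (auto simp: ultrafilters_containing_def ultrafilter_map2_def)
  from sub have "E = ultrafilter_plus U E"
    by (rule ultrafilter_subset_eq[OF E ultrafilter_ultrafilter_map2[OF uU E]])
  then show "U \<in> {U \<in> ultrafilters_containing G. ultrafilter_plus U E = E}"
    using U by (auto simp: ultrafilters_containing_def)
qed

lemma closed_under_plus_ultrafilters_containing_Union:
  assumes "\<And>X. X \<in> C \<Longrightarrow> closed_under_plus (ultrafilters_containing X)"
  shows "closed_under_plus (ultrafilters_containing (\<Union>C))"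
  unfolding closed_under_plus_def
proof (intro ballI)
  fix U V assume UV: "U \<in> ultrafilters_containing (\<Union>C)" "V \<in> ultrafilters_containing (\<Union>C)"
  have "X \<subseteq> ultrafilter_plus U V" if "X \<in> C" for X
  proof -
    have "U \<in> ultrafilters_containing X" "V \<in> ultrafilters_containing X"
      using UV that by (auto simp: ultrafilters_containing_def)
    then show ?thesis
      using assms[OF that] by (auto simp: closed_under_plus_def ultrafilters_containing_def)
  qed
  moreover have "ultrafilter (ultrafilter_plus U V)"
    using UV by (intro ultrafilter_ultrafilter_map2) (simp_all add: ultrafilters_containing_def)
  ultimately show "ultrafilter_plus U V \<in> ultrafilters_containing (\<Union>C)"
    by (auto simp: ultrafilters_containing_def)
qed

lemma ultrafilters_containing_Union_chain_nonempty:
  assumes "C \<noteq> {}" "subset.chain A C" "\<And>X. X \<in> C \<Longrightarrow> ultrafilters_containing X \<noteq> {}"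
  shows "ultrafilters_containing (\<Union>C) \<noteq> {}"
  using finite_intersection_property_Union_chain[OF assms(1,2)] assms(3)
  by (simp add: ultrafilters_containing_nonempty_iff)

lemma minimal_closed_under_plus_exists:
  fixes G0 :: "'a::plus set set"
  assumes "ultrafilters_containing G0 \<noteq> {}" "closed_under_plus (ultrafilters_containing G0)"
  obtains G where "G0 \<subseteq> G" "ultrafilters_containing G \<noteq> {}"
    "closed_under_plus (ultrafilters_containing G)"
    "\<And>H. ultrafilters_containing H \<noteq> {} \<Longrightarrow> closed_under_plus (ultrafilters_containing H) \<Longrightarrow>
       ultrafilters_containing H \<subseteq> ultrafilters_containing G \<Longrightarrow>
       ultrafilters_containing H = ultrafilters_containing G"
proof -
  let ?Z = "{G. G0 \<subseteq> G \<and> ultrafilters_containing G \<noteq> {} \<and> closed_under_plus (ultrafilters_containing G)}"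
  have "\<forall>C\<in>chains ?Z. \<exists>G\<in>?Z. \<forall>X\<in>C. X \<subseteq> G"
  proof
    fix C assume C: "C \<in> chains ?Z"
    show "\<exists>G\<in>?Z. \<forall>X\<in>C. X \<subseteq> G"
    proof (cases "C = {}")
      case True
      have "G0 \<in> ?Z" using assms by simp
      then show ?thesis using True by blast
    next
      case False
      have CZ: "C \<subseteq> ?Z" using chainsD2[OF C] .
      have "subset.chain ?Z C" using C by (simp add: chains_alt_def)
      then have "ultrafilters_containing (\<Union>C) \<noteq> {}"
        using ultrafilters_containing_Union_chain_nonempty[OF False] CZ by blast
      moreover have "closed_under_plus (ultrafilters_containing (\<Union>C))"
        using CZ by (intro closed_under_plus_ultrafilters_containing_Union) blast
      moreover obtain X where "X \<in> C" using False by blast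
      then have "G0 \<subseteq> \<Union>C" using CZ by blast
      ultimately have "\<Union>C \<in> ?Z" by simp
      then show ?thesis by blast
    qed
  qed
  from Zorn_Lemma2[OF this] obtain G where G: "G \<in> ?Z" and max: "\<forall>X\<in>?Z. G \<subseteq> X \<longrightarrow> X = G"
    by blast
  show ?thesis
  proof (rule that)
    show "G0 \<subseteq> G" "ultrafilters_containing G \<noteq> {}" "closed_under_plus (ultrafilters_containing G)"
      using G by simp_all
  next
    fix H assume H: "ultrafilters_containing H \<noteq> {}" "closed_under_plus (ultrafilters_containing H)"
      "ultrafilters_containing H \<subseteq> ultrafilters_containing G"
    have eq: "ultrafilters_containing (G \<union> H) = ultrafilters_containing H"
      using H(3) by (auto simp: ultrafilters_containing_def)
    then have "G \<union> H \<in> ?Z" using G H by auto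
    then have "G \<union> H = G" using max[rule_format, of "G \<union> H"] by simp
    then show "ultrafilters_containing H = ultrafilters_containing G" using eq by simp
  qed
qed

(* Ellis-Numakura: in a minimal closed subsemigroup M every E is idempotent, because M + E and
   {U in M. U + E = E} are again closed subsemigroups of M. *)
context
  fixes G :: "'a::semigroup_add set set"
  assumes closed: "closed_under_plus (ultrafilters_containing G)"
    and minimal: "\<And>H. ultrafilters_containing H \<noteq> {} \<Longrightarrow>
      closed_under_plus (ultrafilters_containing H) \<Longrightarrow>
      ultrafilters_containing H \<subseteq> ultrafilters_containing G \<Longrightarrow>
      ultrafilters_containing H = ultrafilters_containing G"
begin

lemma minimal_closed_under_plus_absorbs_right:
  assumes E: "E \<in> ultrafilters_containing G"
  shows "\<exists>U\<in>ultrafilters_containing G. ultrafilter_plus U E = E"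
proof -
  let ?M = "ultrafilters_containing G"
  have uE: "ultrafilter E" using E by (simp add: ultrafilters_containing_def)
  have plus_M: "ultrafilter_plus U V \<in> ?M" if "U \<in> ?M" "V \<in> ?M" for U V
    using closed that unfolding closed_under_plus_def by blast
  define N where "N = {A. \<forall>U\<in>?M. A \<in> ultrafilter_plus U E}"
  have image: "(\<lambda>U. ultrafilter_plus U E) ` ?M = ultrafilters_containing N"
    unfolding N_def by (rule image_ultrafilter_plus_right[OF uE])
  have "ultrafilters_containing N = ?M"
  proof (rule minimal)
    show "ultrafilters_containing N \<noteq> {}" unfolding image[symmetric] using E by blast
    show "ultrafilters_containing N \<subseteq> ?M" unfolding image[symmetric] using plus_M[OF _ E] by blast
    show "closed_under_plus (ultrafilters_containing N)"
      unfolding closed_under_plus_def image[symmetric]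
    proof (intro ballI)
      fix W W' assume "W \<in> (\<lambda>U. ultrafilter_plus U E) ` ?M" "W' \<in> (\<lambda>U. ultrafilter_plus U E) ` ?M"
      then obtain U U' where U: "U \<in> ?M" "U' \<in> ?M" "W = ultrafilter_plus U E"
        "W' = ultrafilter_plus U' E" by blast
      then have "ultrafilter_plus W W' = ultrafilter_plus (ultrafilter_plus W U') E"
        by (simp add: ultrafilter_plus_assoc)
      moreover have "ultrafilter_plus W U' \<in> ?M" using U E plus_M by simp
      ultimately show "ultrafilter_plus W W' \<in> (\<lambda>U. ultrafilter_plus U E) ` ?M" by blast
    qed
  qed
  then have "E \<in> (\<lambda>U. ultrafilter_plus U E) ` ?M" using E image by simp
  then show ?thesis by blast
qed

lemma minimal_closed_under_plus_idempotent:
  assumes E: "E \<in> ultrafilters_containing G"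
  shows "ultrafilter_plus E E = E"
proof -
  let ?M = "ultrafilters_containing G"
  have uE: "ultrafilter E" using E by (simp add: ultrafilters_containing_def)
  define F where "F = G \<union> {{a. {b. a + b \<in> A} \<in> E} | A. A \<in> E}"
  have fixing: "{U \<in> ?M. ultrafilter_plus U E = E} = ultrafilters_containing F"
    unfolding F_def by (rule ultrafilters_containing_fixing[OF uE])
  have "ultrafilters_containing F = ?M"
  proof (rule minimal)
    show "ultrafilters_containing F \<noteq> {}"
      unfolding fixing[symmetric] using minimal_closed_under_plus_absorbs_right[OF E] by blast
    show "ultrafilters_containing F \<subseteq> ?M" unfolding fixing[symmetric] by blast
    show "closed_under_plus (ultrafilters_containing F)"
      unfolding fixing[symmetric] using closed
      by (simp add: closed_under_plus_def ultrafilter_plus_assoc)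
  qed
  then have "E \<in> {U \<in> ?M. ultrafilter_plus U E = E}" using E fixing by simp
  then show ?thesis by simp
qed

end

theorem idempotent_ultrafilter_exists:
  fixes G0 :: "'a::semigroup_add set set"
  assumes "ultrafilters_containing G0 \<noteq> {}" "closed_under_plus (ultrafilters_containing G0)"
  shows "\<exists>E\<in>ultrafilters_containing G0. ultrafilter_plus E E = E"
proof -
  obtain G where G: "G0 \<subseteq> G" "ultrafilters_containing G \<noteq> {}"
    "closed_under_plus (ultrafilters_containing G)"
    and minimal: "\<And>H. ultrafilters_containing H \<noteq> {} \<Longrightarrow>
      closed_under_plus (ultrafilters_containing H) \<Longrightarrow>
      ultrafilters_containing H \<subseteq> ultrafilters_containing G \<Longrightarrow>
      ultrafilters_containing H = ultrafilters_containing G"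
    using minimal_closed_under_plus_exists[OF assms] by blast
  obtain E where E: "E \<in> ultrafilters_containing G" using G(2) by blast
  have "ultrafilter_plus E E = E" by (rule minimal_closed_under_plus_idempotent[OF G(3) minimal E])
  moreover have "E \<in> ultrafilters_containing G0"
    using E G(1) by (auto simp: ultrafilters_containing_def)
  ultimately show ?thesis by blast
qed

section \<open>Finite sums and the Galvin-Glazer theorem\<close>

lemma mem_FS_iff: "n \<in> FS D \<longleftrightarrow> (\<exists>\<alpha>. \<alpha> \<subseteq> D \<and> finite \<alpha> \<and> \<alpha> \<noteq> {} \<and> n = \<Sum>\<alpha>)"
  unfolding FS_def by blast

lemma FS_E:
  assumes "n \<in> FS D"
  obtains \<alpha> where "\<alpha> \<subseteq> D" "finite \<alpha>" "\<alpha> \<noteq> {}" "n = \<Sum>\<alpha>"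
  using assms unfolding FS_def by blast

lemma subset_FS: "D \<subseteq> FS D"
proof
  fix n assume "n \<in> D"
  then show "n \<in> FS D" unfolding mem_FS_iff by (intro exI[of _ "{n}"]) simp
qed

lemma FS_subset_atLeast: "FS (D \<inter> {k..}) \<subseteq> {k..}"
proof
  fix n assume "n \<in> FS (D \<inter> {k..})"
  then obtain \<alpha> where \<alpha>: "\<alpha> \<subseteq> D \<inter> {k..}" "finite \<alpha>" "\<alpha> \<noteq> {}" "n = \<Sum>\<alpha>"
    by (rule FS_E)
  then obtain i where "i \<in> \<alpha>" by blast
  then have "k \<le> i" "i \<le> \<Sum>\<alpha>" using \<alpha>(1,2) member_le_sum[of i \<alpha> id] by auto
  then show "n \<in> {k..}" using \<alpha>(4) by simp
qed

lemma FS_atLeast_translate: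
  assumes "n \<in> FS (D \<inter> {k..})"
  obtains j where "FS (D \<inter> {j..}) \<subseteq> {m. n + m \<in> FS (D \<inter> {k..})}"
proof -
  obtain \<alpha> where \<alpha>: "\<alpha> \<subseteq> D \<inter> {k..}" "finite \<alpha>" "\<alpha> \<noteq> {}" "n = \<Sum>\<alpha>"
    using assms by (rule FS_E)
  have "n + m \<in> FS (D \<inter> {k..})" if m: "m \<in> FS (D \<inter> {Suc (Max \<alpha>)..})" for m
  proof -
    obtain \<beta> where \<beta>: "\<beta> \<subseteq> D \<inter> {Suc (Max \<alpha>)..}" "finite \<beta>" "\<beta> \<noteq> {}" "m = \<Sum>\<beta>"
      using m by (rule FS_E)
    have "i \<notin> \<beta>" if "i \<in> \<alpha>" for i
      using Max_ge[OF \<alpha>(2) that] \<beta>(1) by auto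
    then have "\<alpha> \<inter> \<beta> = {}" by blast
    then have sum_eq: "n + m = \<Sum>(\<alpha> \<union> \<beta>)"
      using \<alpha>(2,4) \<beta>(2,4) by (simp add: sum.union_disjoint)
    obtain i where "i \<in> \<alpha>" using \<alpha>(3) by blast
    then have "k \<le> Max \<alpha>" using \<alpha>(1) Max_ge[OF \<alpha>(2)] by (meson IntD2 atLeast_iff order_trans subsetD)
    then have "\<alpha> \<union> \<beta> \<subseteq> D \<inter> {k..}" using \<alpha>(1) \<beta>(1) by auto
    moreover have "finite (\<alpha> \<union> \<beta>)" "\<alpha> \<union> \<beta> \<noteq> {}" using \<alpha>(2,3) \<beta>(2) by auto
    ultimately show ?thesis using sum_eq unfolding mem_FS_iff by blast
  qed
  then show ?thesis using that[of "Suc (Max \<alpha>)"] by blast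
qed

lemma finite_intersection_property_FS_tails:
  assumes "infinite D"
  shows "finite_intersection_property (range (\<lambda>k. FS (D \<inter> {k..})))"
  unfolding finite_intersection_property_def
proof (intro allI impI)
  fix H assume H: "finite H" "H \<subseteq> range (\<lambda>k. FS (D \<inter> {k..}))"
  then obtain I where I: "finite I" "H = (\<lambda>k. FS (D \<inter> {k..})) ` I"
    using finite_subset_image[OF H] by blast
  obtain f where f: "f \<in> D" "Max (insert 0 I) \<le> f"
    using assms by (meson infinite_nat_iff_unbounded_le)
  have "f \<in> FS (D \<inter> {k..})" if "k \<in> I" for k
  proof -
    have "k \<le> f" using f(2) that I(1) by (meson Max_ge finite_insert insertI2 le_trans)
    then show ?thesis using f(1) subset_FS[of "D \<inter> {k..}"] by blast
  qed
  then have "f \<in> \<Inter>H" using I(2) by blast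
  then show "\<Inter>H \<noteq> {}" by blast
qed

lemma closed_under_plus_FS_tails:
  "closed_under_plus (ultrafilters_containing (range (\<lambda>k. FS (D \<inter> {k..}))))"
  (is "closed_under_plus (ultrafilters_containing ?G)")
  unfolding closed_under_plus_def
proof (intro ballI)
  fix U V assume U: "U \<in> ultrafilters_containing ?G" and V: "V \<in> ultrafilters_containing ?G"
  have uU: "ultrafilter U" and uV: "ultrafilter V" and GU: "?G \<subseteq> U" and GV: "?G \<subseteq> V"
    using U V by (auto simp: ultrafilters_containing_def)
  have "FS (D \<inter> {k..}) \<in> ultrafilter_plus U V" for k
  proof -
    have "FS (D \<inter> {k..}) \<subseteq> {n. {m. n + m \<in> FS (D \<inter> {k..})} \<in> V}"
    proof
      fix n assume "n \<in> FS (D \<inter> {k..})"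
      then obtain j where "FS (D \<inter> {j..}) \<subseteq> {m. n + m \<in> FS (D \<inter> {k..})}"
        by (rule FS_atLeast_translate)
      moreover have "FS (D \<inter> {j..}) \<in> V" using GV by blast
      ultimately show "n \<in> {n. {m. n + m \<in> FS (D \<inter> {k..})} \<in> V}"
        using ultrafilter_mono[OF uV] by blast
    qed
    moreover have "FS (D \<inter> {k..}) \<in> U" using GU by blast
    ultimately show ?thesis
      using ultrafilter_mono[OF uU] by (simp add: ultrafilter_map2_def)
  qed
  then show "ultrafilter_plus U V \<in> ultrafilters_containing ?G"
    using ultrafilter_ultrafilter_map2[OF uU uV] by (auto simp: ultrafilters_containing_def)
qed

lemma idempotent_ultrafilter_FS:
  assumes "infinite D"
  obtains E where "ultrafilter E" "ultrafilter_plus E E = E" "\<And>k. FS (D \<inter> {k..}) \<in> E"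
proof -
  have "ultrafilters_containing (range (\<lambda>k. FS (D \<inter> {k..}))) \<noteq> {}"
    using finite_intersection_property_FS_tails[OF assms] ultrafilters_containing_nonempty_iff
    by blast
  then obtain E where E: "E \<in> ultrafilters_containing (range (\<lambda>k. FS (D \<inter> {k..})))"
    "ultrafilter_plus E E = E"
    using idempotent_ultrafilter_exists[OF _ closed_under_plus_FS_tails] by blast
  show ?thesis
    by (rule that[of E]) (use E in \<open>auto simp: ultrafilters_containing_def\<close>)
qed

(* The set A^* of Hindman and Strauss, Lemma 4.14. *)
definition star_set :: "'a::plus set set \<Rightarrow> 'a set \<Rightarrow> 'a set" where
  "star_set U A = {a \<in> A. {b. a + b \<in> A} \<in> U}"

lemma star_set_mem:
  assumes U: "ultrafilter U" and idem: "ultrafilter_plus U U = U" and A: "A \<in> U"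
  shows "star_set U A \<in> U"
proof -
  have "A \<in> ultrafilter_plus U U" using A idem by simp
  then have "{a. {b. a + b \<in> A} \<in> U} \<in> U" by (simp add: ultrafilter_map2_def)
  then have "A \<inter> {a. {b. a + b \<in> A} \<in> U} \<in> U" using ultrafilter_Int[OF U A] by blast
  moreover have "A \<inter> {a. {b. a + b \<in> A} \<in> U} = star_set U A" by (auto simp: star_set_def)
  ultimately show ?thesis by simp
qed

lemma star_set_translate:
  fixes U :: "'a::semigroup_add set set"
  assumes U: "ultrafilter U" and idem: "ultrafilter_plus U U = U" and a: "a \<in> star_set U A"
  shows "{b. a + b \<in> star_set U A} \<in> U"
proof -
  have "{b. a + b \<in> star_set U A} = star_set U {b. a + b \<in> A}"
    by (simp add: star_set_def add.assoc)
  moreover have "{b. a + b \<in> A} \<in> U" using a by (simp add: star_set_def)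
  ultimately show ?thesis using star_set_mem[OF U idem] by simp
qed

lemma sum_mem_shift_chain:
  fixes d :: "nat \<Rightarrow> 'a::comm_monoid_add"
  assumes d: "\<And>i. d i \<in> C i" and C_dec: "decseq C"
    and C_shift: "\<And>i. C (Suc i) \<subseteq> {b. d i + b \<in> C i}"
  shows "finite a \<Longrightarrow> a \<noteq> {} \<Longrightarrow> a \<subseteq> {k..} \<Longrightarrow> sum d a \<in> C k"
proof (induction a arbitrary: k rule: finite_linorder_min_induct)
  case empty
  then show ?case by simp
next
  case (insert i a)
  have "d i + sum d a \<in> C i"
  proof (cases "a = {}")
    case True
    then show ?thesis using d by simp
  next
    case False
    have "a \<subseteq> {Suc i..}" using insert.hyps(2) by (auto simp: Suc_le_eq)
    then have "sum d a \<in> C (Suc i)" using insert.IH False by blast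
    then show ?thesis using C_shift by blast
  qed
  moreover have "i \<notin> a" using insert.hyps(2) by blast
  then have "sum d (insert i a) = d i + sum d a" using insert.hyps(1) by simp
  moreover have "C i \<subseteq> C k" using decseqD[OF C_dec] insert.prems(2) by simp
  ultimately show ?case by auto
qed

lemma FS_image_subset_shift_chain:
  fixes d :: "nat \<Rightarrow> nat"
  assumes inj: "inj d" and chain: "\<And>i. d i \<in> C i" "decseq C" "\<And>i. C (Suc i) \<subseteq> {b. d i + b \<in> C i}"
  shows "FS (d ` {k..}) \<subseteq> C k"
proof
  fix s assume "s \<in> FS (d ` {k..})"
  then obtain g where g: "g \<subseteq> d ` {k..}" "finite g" "g \<noteq> {}" "s = \<Sum>g" by (rule FS_E)
  then obtain a where a: "a \<subseteq> {k..}" "g = d ` a" by (auto simp: subset_image_iff)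
  have "finite a" using g(2) a(2) inj by (simp add: finite_image_iff inj_on_subset)
  moreover have "a \<noteq> {}" using g(3) a(2) by auto
  moreover have "s = sum d a" using g(4) a(2) inj by (simp add: sum.reindex inj_on_subset)
  ultimately show "s \<in> C k" using sum_mem_shift_chain[OF chain] a(1) by blast
qed

lemma idempotent_ultrafilter_shift_chain:
  fixes U :: "nat set set"
  assumes U: "ultrafilter U" and idem: "ultrafilter_plus U U = U" and cofinite: "\<And>k. {k..} \<in> U"
    and A: "\<And>m. A m \<in> U"
  obtains d :: "nat \<Rightarrow> nat" and C :: "nat \<Rightarrow> nat set"
  where "strict_mono d" "\<And>m. d m \<in> C m" "\<And>m. C m \<subseteq> A m"
    "\<And>m. C (Suc m) \<subseteq> C m \<inter> {b. d m + b \<in> C m}"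
proof -
  define P where "P m x \<longleftrightarrow> snd x \<in> U \<and> (\<forall>a\<in>snd x. {b. a + b \<in> snd x} \<in> U)
    \<and> snd x \<subseteq> A m \<and> fst x \<in> snd x" for m and x :: "nat \<times> nat set"
  define Q where "Q x y \<longleftrightarrow> fst x < fst y \<and> snd y \<subseteq> snd x \<inter> {b. fst x + b \<in> snd x}"
    for x y :: "nat \<times> nat set"
  have star: "P m (a, star_set U B)" if "B \<in> U" "B \<subseteq> A m" "a \<in> star_set U B" for m a B
    using star_set_mem[OF U idem that(1)] star_set_translate[OF U idem] that(2,3)
    by (auto simp: P_def star_set_def)
  have pick: "\<exists>a\<in>star_set U B. c < a" if "B \<in> U" for B c
  proof -
    have "star_set U B \<inter> {Suc c..} \<in> U"
      using ultrafilter_Int[OF U star_set_mem[OF U idem that] cofinite] .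
    then have "star_set U B \<inter> {Suc c..} \<noteq> {}" using ultrafilter_empty[OF U] by auto
    then show ?thesis by (auto simp: Suc_le_eq)
  qed
  have "\<exists>f. \<forall>m. P m (f m) \<and> Q (f m) (f (Suc m))"
  proof (rule dependent_nat_choice)
    obtain a where "a \<in> star_set U (A 0)" using pick[OF A] by blast
    then show "\<exists>x. P 0 x" using star[OF A order_refl] by blast
  next
    fix x m assume Px: "P m x"
    obtain c C where x: "x = (c, C)" by fastforce
    let ?B = "C \<inter> {b. c + b \<in> C} \<inter> A (Suc m)"
    have "?B \<in> U" using Px x A by (simp add: P_def ultrafilter_Int[OF U])
    then obtain a where a: "a \<in> star_set U ?B" "c < a" using pick by blast
    have "P (Suc m) (a, star_set U ?B)" using star[OF \<open>?B \<in> U\<close> _ a(1)] by blast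
    moreover have "Q x (a, star_set U ?B)" using a x by (auto simp: Q_def star_set_def)
    ultimately show "\<exists>y. P (Suc m) y \<and> Q x y" by blast
  qed
  then obtain f where f: "\<And>m. P m (f m)" "\<And>m. Q (f m) (f (Suc m))" by blast
  show ?thesis
  proof (rule that[of "\<lambda>m. fst (f m)" "\<lambda>m. snd (f m)"])
    show "strict_mono (\<lambda>m. fst (f m))" using f(2) by (simp add: strict_mono_Suc_iff Q_def)
    show "fst (f m) \<in> snd (f m)" "snd (f m) \<subseteq> A m" for m using f(1)[of m] by (simp_all add: P_def)
    show "snd (f (Suc m)) \<subseteq> snd (f m) \<inter> {b. fst (f m) + b \<in> snd (f m)}" for m
      using f(2)[of m] by (simp add: Q_def)
  qed
qed

theorem galvin_glazer:
  fixes U :: "nat set set"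
  assumes U: "ultrafilter U" and idem: "ultrafilter_plus U U = U" and cofinite: "\<And>k. {k..} \<in> U"
    and A: "\<And>m. A m \<in> U"
  obtains d :: "nat \<Rightarrow> nat" where "strict_mono d" "\<And>m. FS (d ` {m..}) \<subseteq> A m"
proof -
  obtain d :: "nat \<Rightarrow> nat" and C :: "nat \<Rightarrow> nat set" where d: "strict_mono d" "\<And>m. d m \<in> C m" "\<And>m. C m \<subseteq> A m"
    "\<And>m. C (Suc m) \<subseteq> C m \<inter> {b. d m + b \<in> C m}"
    using idempotent_ultrafilter_shift_chain[where A=A, OF U idem cofinite A] by blast
  have "FS (d ` {m..}) \<subseteq> C m" for m
  proof (rule FS_image_subset_shift_chain)
    show "inj d" using d(1) by (rule strict_mono_imp_inj_on)
    show "d i \<in> C i" for i by (fact d(2))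
    show "decseq C" using d(4) by (auto simp: decseq_Suc_iff)
    show "C (Suc i) \<subseteq> {b. d i + b \<in> C i}" for i using d(4) by blast
  qed
  then have "FS (d ` {m..}) \<subseteq> A m" for m using d(3)[of m] by blast
  then show ?thesis by (rule that[OF d(1)])
qed

section \<open>Diagonalizing ultrafilters\<close>

definition diagonalizes :: "(nat set \<Rightarrow> 'b set) \<Rightarrow> 'b set set \<Rightarrow> bool" where
  "diagonalizes \<rho> P \<longleftrightarrow> (\<forall>A. decseq A \<longrightarrow> (\<forall>m. A m \<in> P) \<longrightarrow>
     (\<exists>F. infinite F \<and> (\<forall>m. \<exists>K. finite K \<and> \<rho> (F - K) \<subseteq> A m)))"

lemma diagonalizesI:
  assumes "\<And>A. decseq A \<Longrightarrow> (\<And>m. A m \<in> P) \<Longrightarrow> \<exists>d. strict_mono d \<and> (\<forall>m. \<rho> (d ` {m..}) \<subseteq> A m)"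
  shows "diagonalizes \<rho> P"
  unfolding diagonalizes_def
proof (intro allI impI)
  fix A assume "decseq A" "\<forall>m. A m \<in> P"
  then obtain d where d: "strict_mono d" "\<And>m. \<rho> (d ` {m..}) \<subseteq> A m" using assms by blast
  have inj: "inj d" using d(1) by (rule strict_mono_imp_inj_on)
  have "range d - d ` {..<m} = d ` {m..}" for m
    using image_set_diff[OF inj, of UNIV "{..<m}"] by (simp add: Diff_eq Compl_lessThan)
  then have "finite (d ` {..<m}) \<and> \<rho> (range d - d ` {..<m}) \<subseteq> A m" for m using d(2) by simp
  moreover have "infinite (range d)" using inj by (rule range_inj_infinite)
  ultimately show "\<exists>F. infinite F \<and> (\<forall>m. \<exists>K. finite K \<and> \<rho> (F - K) \<subseteq> A m)" by blast
qed

lemma diagonalizesD: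
  assumes "diagonalizes \<rho> P" "decseq A" "\<And>m. A m \<in> P"
  obtains F where "infinite F" "\<And>m. \<exists>K. finite K \<and> \<rho> (F - K) \<subseteq> A m"
  using assms unfolding diagonalizes_def by blast

lemma diagonalizes_imp_image_subset:
  assumes "diagonalizes \<rho> P" "B \<in> P"
  obtains F where "infinite F" "\<rho> F \<subseteq> B"
proof -
  obtain F where F: "infinite F" "\<forall>m. \<exists>K. finite K \<and> \<rho> (F - K) \<subseteq> B"
    using assms unfolding diagonalizes_def by (metis decseq_const)
  then obtain K where "finite K" "\<rho> (F - K) \<subseteq> B" by blast
  moreover have "infinite (F - K)" using F(1) \<open>finite K\<close> by (simp add: Diff_infinite_finite)
  ultimately show ?thesis using that by blast
qed

lemma FS_diagonalizing_ultrafilter: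
  assumes "infinite D"
  shows "\<exists>P. ultrafilter P \<and> FS D \<in> P \<and> diagonalizes FS P"
proof -
  obtain E where E: "ultrafilter E" "ultrafilter_plus E E = E" "\<And>k. FS (D \<inter> {k..}) \<in> E"
    using idempotent_ultrafilter_FS[OF assms] by blast
  have "{k..} \<in> E" for k using ultrafilter_mono[OF E(1) E(3) FS_subset_atLeast] .
  then have "diagonalizes FS E"
    by (intro diagonalizesI) (metis galvin_glazer E(1,2))
  moreover have "FS D \<in> E" using E(3)[of 0] by simp
  ultimately show ?thesis using E(1) by blast
qed

lemma cofinite_ultrafilter_exists:
  fixes D :: "nat set"
  assumes "infinite D"
  obtains U where "ultrafilter U" "D \<in> U" "\<And>k. {k..} \<in> U"
proof -
  have "finite_intersection_property (insert D (range atLeast))"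
    unfolding finite_intersection_property_def
  proof (intro allI impI)
    fix H assume H: "finite H" "H \<subseteq> insert D (range atLeast)"
    then obtain I where I: "finite I" "H - {D} = atLeast ` I"
      using finite_subset_image[of "H - {D}" atLeast UNIV] by blast
    obtain f where f: "f \<in> D" "Max (insert 0 I) \<le> f"
      using assms by (meson infinite_nat_iff_unbounded_le)
    have "k \<le> f" if "k \<in> I" for k
      using f(2) that I(1) by (meson Max_ge finite_insert insertI2 le_trans)
    then have "f \<in> \<Inter>(atLeast ` I)" by simp
    then have "f \<in> \<Inter>H" using f(1) I(2) by blast
    then show "\<Inter>H \<noteq> {}" by blast
  qed
  then obtain U where "ultrafilter U" "insert D (range atLeast) \<subseteq> U"
    using ultrafilter_exists by blast
  then show ?thesis using that by blast
qed

lemma pairs_image_subset: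
  assumes A: "decseq A" and d: "\<And>i j. i < j \<Longrightarrow> {d i, d j} \<in> A i"
  shows "pairs (d ` {m..}) \<subseteq> A m"
proof
  fix s assume "s \<in> pairs (d ` {m..})"
  then have s: "s \<subseteq> d ` {m..}" "card s = 2" by (auto simp: pairs_def)
  then obtain x y where xy: "s = {x, y}" "x \<noteq> y" by (auto simp: card_2_iff)
  then obtain i j where "x = d i" "y = d j" "m \<le> i" "m \<le> j" using s(1) by blast
  then have ij: "s = {d i, d j}" "i \<noteq> j" "m \<le> i" "m \<le> j" using xy by auto
  show "s \<in> A m"
  proof (cases "i < j")
    case True
    then show ?thesis using d[of i j] decseqD[OF A \<open>m \<le> i\<close>] ij(1) by blast
  next
    case False
    then have "j < i" using ij(2) by simp
    then show ?thesis using d[of j i] decseqD[OF A \<open>m \<le> j\<close>] ij(1) by (auto simp: insert_commute)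
  qed
qed

lemma pairs_mem_ultrafilter_map2:
  assumes U: "ultrafilter U" and cofinite: "\<And>k. {k..} \<in> U" and D: "D \<in> U"
  shows "pairs D \<in> ultrafilter_map2 (\<lambda>i j. {i, j}) U U"
proof -
  have "{j. {i, j} \<in> pairs D} \<in> U" if "i \<in> D" for i
  proof (rule ultrafilter_mono[OF U ultrafilter_Int[OF U D cofinite[of "Suc i"]]])
    show "D \<inter> {Suc i..} \<subseteq> {j. {i, j} \<in> pairs D}" using that by (auto simp: pairs_def)
  qed
  then have "D \<subseteq> {i. {j. {i, j} \<in> pairs D} \<in> U}" by blast
  then show ?thesis using ultrafilter_mono[OF U D] by (simp add: ultrafilter_map2_def)
qed

lemma pair_ultrafilter_chain:
  fixes U :: "nat set set"
  assumes U: "ultrafilter U" and cofinite: "\<And>k. {k..} \<in> U"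
    and A: "\<And>m. A m \<in> ultrafilter_map2 (\<lambda>i j. {i, j}) U U"
  obtains d :: "nat \<Rightarrow> nat" and S :: "nat \<Rightarrow> nat set"
  where "\<And>i. d (Suc i) \<in> S i" "decseq S"
    "\<And>i j. j \<in> S i \<Longrightarrow> {d i, j} \<in> A i \<and> d i < j"
proof -
  have starts: "{i. {j. {i, j} \<in> A m} \<in> U} \<in> U" for m
    using A by (simp add: ultrafilter_map2_def)
  define P where "P m x \<longleftrightarrow> snd x \<in> U \<and> (\<forall>j\<in>snd x. {fst x, j} \<in> A m \<and> fst x < j)"
    for m and x :: "nat \<times> nat set"
  define Q where "Q x y \<longleftrightarrow> fst y \<in> snd x \<and> snd y \<subseteq> snd x" for x y :: "nat \<times> nat set"
  have next_in: "\<exists>y. P m y \<and> fst y \<in> S \<and> snd y \<subseteq> S" if S: "S \<in> U" for m S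
  proof -
    have "S \<inter> {i. {j. {i, j} \<in> A m} \<in> U} \<in> U" using ultrafilter_Int[OF U S starts] .
    then have "S \<inter> {i. {j. {i, j} \<in> A m} \<in> U} \<noteq> {}" using ultrafilter_empty[OF U] by auto
    then obtain i where i: "i \<in> S" "{j. {i, j} \<in> A m} \<in> U" by blast
    let ?S' = "S \<inter> {j. {i, j} \<in> A m} \<inter> {Suc i..}"
    have "?S' \<in> U" using S i(2) cofinite by (simp add: ultrafilter_Int[OF U])
    then have "P m (i, ?S')" by (auto simp: P_def)
    then show ?thesis using i(1) by force
  qed
  have "\<exists>f. \<forall>m. P m (f m) \<and> Q (f m) (f (Suc m))"
  proof (rule dependent_nat_choice)
    show "\<exists>x. P 0 x" using next_in[OF cofinite[of 0]] by blast
  next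
    fix x m assume "P m x"
    then have "snd x \<in> U" by (simp add: P_def)
    then show "\<exists>y. P (Suc m) y \<and> Q x y" using next_in[of "snd x" "Suc m"] by (auto simp: Q_def)
  qed
  then obtain f where f: "\<And>m. P m (f m)" "\<And>m. Q (f m) (f (Suc m))" by blast
  show ?thesis
  proof (rule that[of "\<lambda>m. fst (f m)" "\<lambda>m. snd (f m)"])
    show "decseq (\<lambda>m. snd (f m))" using f(2) by (auto simp: decseq_Suc_iff Q_def)
    show "fst (f (Suc i)) \<in> snd (f i)" for i using f(2)[of i] by (simp add: Q_def)
    show "{fst (f i), j} \<in> A i \<and> fst (f i) < j" if "j \<in> snd (f i)" for i j
      using f(1)[of i] that by (simp add: P_def)
  qed
qed

lemma diagonalizes_pairs:
  assumes U: "ultrafilter U" and cofinite: "\<And>k. {k..} \<in> U"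
  shows "diagonalizes pairs (ultrafilter_map2 (\<lambda>i j. {i, j}) U U)"
proof (rule diagonalizesI)
  fix A assume A: "decseq A" "\<And>m. A m \<in> ultrafilter_map2 (\<lambda>i j. {i, j}) U U"
  obtain d :: "nat \<Rightarrow> nat" and S :: "nat \<Rightarrow> nat set" where d: "\<And>i. d (Suc i) \<in> S i" "decseq S"
    "\<And>i j. j \<in> S i \<Longrightarrow> {d i, j} \<in> A i \<and> d i < j"
    using pair_ultrafilter_chain[where A=A, OF U cofinite A(2)] by blast
  have d_pairs: "{d i, d j} \<in> A i \<and> d i < d j" if ij: "i < j" for i j
  proof -
    obtain j' where "j = Suc j'" "i \<le> j'" using ij by (cases j) auto
    then have "d j \<in> S i" using d(1)[of j'] decseqD[OF d(2) \<open>i \<le> j'\<close>] by auto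
    then show ?thesis using d(3) by blast
  qed
  then have "strict_mono d" by (simp add: strict_monoI)
  moreover have "pairs (d ` {m..}) \<subseteq> A m" for m
    using pairs_image_subset[OF A(1)] d_pairs by blast
  ultimately show "\<exists>d. strict_mono d \<and> (\<forall>m. pairs (d ` {m..}) \<subseteq> A m)" by blast
qed

lemma pairs_diagonalizing_ultrafilter:
  assumes "infinite D"
  shows "\<exists>P. ultrafilter P \<and> pairs D \<in> P \<and> diagonalizes pairs P"
proof -
  obtain U where U: "ultrafilter U" "D \<in> U" "\<And>k. {k..} \<in> U"
    using cofinite_ultrafilter_exists[OF assms] by blast
  have "ultrafilter (ultrafilter_map2 (\<lambda>i j. {i, j}) U U)"
    by (rule ultrafilter_ultrafilter_map2[OF U(1) U(1)])
  moreover have "pairs D \<in> ultrafilter_map2 (\<lambda>i j. {i, j}) U U"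
    by (rule pairs_mem_ultrafilter_map2[OF U(1) U(3) U(2)])
  moreover have "diagonalizes pairs (ultrafilter_map2 (\<lambda>i j. {i, j}) U U)"
    by (rule diagonalizes_pairs[OF U(1) U(3)])
  ultimately show ?thesis by blast
qed

section \<open>Isolated points of Gamma\<close>

lemma isolated_in_compact_neighbourhood:
  fixes \<eta> :: "'a::metric_space"
  assumes iso: "\<eta> isolated_in S" and lc: "locally_compact_space (euclidean :: 'a topology)"
  obtains V C where "open V" "\<eta> \<in> V" "V \<subseteq> C" "compact C" "C \<inter> S \<subseteq> {\<eta>}"
proof -
  obtain W where W: "open W" "W \<inter> S = {\<eta>}" using iso by (meson isolated_in_def)
  moreover have "\<eta> \<in> W" using W(2) by blast
  ultimately obtain r where r: "r > 0" "cball \<eta> r \<subseteq> W" by (meson open_contains_cball)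
  have "\<exists>U K. openin euclidean U \<and> compactin euclidean K \<and> \<eta> \<in> U \<and> U \<subseteq> K"
    using lc unfolding locally_compact_space_def by simp
  then obtain U K where "openin euclidean U" "compactin euclidean K" and UK: "\<eta> \<in> U" "U \<subseteq> K"
    by blast
  then have "open U" "compact K" using open_openin compactin_euclidean_iff by blast+
  show ?thesis
  proof (rule that)
    show "open (U \<inter> ball \<eta> r)" using \<open>open U\<close> by (simp add: open_Int)
    show "\<eta> \<in> U \<inter> ball \<eta> r" using UK(1) r(1) by simp
    show "U \<inter> ball \<eta> r \<subseteq> K \<inter> cball \<eta> r" using UK(2) ball_subset_cball by blast
    show "compact (K \<inter> cball \<eta> r)" using \<open>compact K\<close> closed_cball by (rule compact_Int_closed)
    have "K \<inter> cball \<eta> r \<inter> S \<subseteq> W \<inter> S" using r(2) by blast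
    then show "K \<inter> cball \<eta> r \<inter> S \<subseteq> {\<eta>}" using W(2) by simp
  qed
qed

(* Compactness of C - U together with partition regularity of P. *)
lemma preimage_open_mem_ultrafilter:
  fixes x :: "'b \<Rightarrow> 'a::topological_space"
  assumes P: "ultrafilter P" "diagonalizes \<rho> P"
    and C: "compact C" "C \<inter> Gamma \<rho> x \<subseteq> {\<eta>}" "{s. x s \<in> C} \<in> P"
    and U: "open U" "\<eta> \<in> U"
  shows "{s. x s \<in> U} \<in> P"
proof -
  have "\<exists>N. open N \<and> y \<in> N \<and> {s. x s \<in> N} \<notin> P" if y: "y \<in> C - U" for y
  proof -
    have "y \<notin> Gamma \<rho> x" using y C(2) U(2) by blast
    then obtain N where N: "open N" "y \<in> N" "\<not> (\<exists>F. infinite F \<and> \<rho> F \<subseteq> {s. x s \<in> N})"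
      unfolding Gamma_def by blast
    then have "{s. x s \<in> N} \<notin> P" using diagonalizes_imp_image_subset[OF P(2)] by metis
    then show ?thesis using N(1,2) by blast
  qed
  then obtain N where N: "\<And>y. y \<in> C - U \<Longrightarrow> open (N y) \<and> y \<in> N y \<and> {s. x s \<in> N y} \<notin> P"
    by metis
  have "compact (C - U)" using C(1) U(1) by (simp add: Diff_eq compact_Int_closed closed_Compl)
  moreover have "open (N y)" if "y \<in> C - U" for y using N[OF that] by blast
  moreover have "C - U \<subseteq> (\<Union>y\<in>C - U. N y)" using N by blast
  ultimately obtain Y where Y: "Y \<subseteq> C - U" "finite Y" "C - U \<subseteq> (\<Union>y\<in>Y. N y)"
    by (rule compactE_image)
  have "{s. x s \<in> C} \<subseteq> (\<Union>V\<in>insert U (N ` Y). {s. x s \<in> V})" using Y(3) by blast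
  then have "(\<Union>V\<in>insert U (N ` Y). {s. x s \<in> V}) \<in> P" using ultrafilter_mono[OF P(1) C(3)] by blast
  moreover have "finite (insert U (N ` Y))" using Y(2) by simp
  ultimately obtain V where V: "V \<in> insert U (N ` Y)" "{s. x s \<in> V} \<in> P"
    using ultrafilter_UN_imp_ex[OF P(1)] by blast
  then show ?thesis using N Y(1) by blast
qed

lemma mem_LambdaI_balls:
  fixes x :: "'b \<Rightarrow> 'a::metric_space"
  assumes "infinite F" "\<And>m. \<exists>K. finite K \<and> \<rho> (F - K) \<subseteq> {s. x s \<in> ball \<eta> (inverse (Suc m))}"
  shows "\<eta> \<in> Lambda \<rho> x"
  unfolding Lambda_def
proof (rule CollectI, rule exI[of _ F], intro conjI allI impI)
  show "infinite F" by (fact assms(1))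
  fix U assume "open U \<and> \<eta> \<in> U"
  then obtain e where e: "e > 0" "ball \<eta> e \<subseteq> U" using open_contains_ball by blast
  then obtain m where "inverse (Suc m) < e" using reals_Archimedean by blast
  then have "ball \<eta> (inverse (Suc m)) \<subseteq> U" using e(2) by auto
  moreover obtain K where "finite K" "\<rho> (F - K) \<subseteq> {s. x s \<in> ball \<eta> (inverse (Suc m))}"
    using assms(2) by blast
  ultimately show "\<exists>K. finite K \<and> (\<forall>s\<in>\<rho> (F - K). x s \<in> U)" by blast
qed

theorem isolated_in_Gamma_imp_Lambda:
  fixes x :: "'b \<Rightarrow> 'a::metric_space" and \<rho> :: "nat set \<Rightarrow> 'b set"
  assumes iso: "\<eta> isolated_in Gamma \<rho> x"
    and lc: "locally_compact_space (euclidean :: 'a topology)"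
    and diag: "\<And>D. infinite D \<Longrightarrow> \<exists>P. ultrafilter P \<and> \<rho> D \<in> P \<and> diagonalizes \<rho> P"
  shows "\<eta> \<in> Lambda \<rho> x"
proof -
  obtain V C where V: "open V" "\<eta> \<in> V" "V \<subseteq> C" and C: "compact C" "C \<inter> Gamma \<rho> x \<subseteq> {\<eta>}"
    using isolated_in_compact_neighbourhood[OF iso lc] by blast
  have "\<eta> \<in> Gamma \<rho> x" using iso by (simp add: isolated_in_def)
  then obtain D where D: "infinite D" "\<rho> D \<subseteq> {s. x s \<in> V}"
    using V(1,2) unfolding Gamma_def by blast
  obtain P where P: "ultrafilter P" "\<rho> D \<in> P" "diagonalizes \<rho> P" using diag[OF D(1)] by blast
  have "\<rho> D \<subseteq> {s. x s \<in> C}" using D(2) V(3) by blast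
  then have CP: "{s. x s \<in> C} \<in> P" by (rule ultrafilter_mono[OF P(1) P(2)])
  define A where "A m = {s. x s \<in> ball \<eta> (inverse (Suc m))}" for m
  have A_mem: "A m \<in> P" for m
    unfolding A_def by (rule preimage_open_mem_ultrafilter[OF P(1,3) C CP]) simp_all
  have "ball \<eta> (inverse (Suc (Suc m))) \<subseteq> ball \<eta> (inverse (Suc m))" for m
    by (intro subset_ball le_imp_inverse_le) auto
  then have "decseq A" unfolding A_def by (intro decseq_SucI) blast
  obtain F where "infinite F" "\<And>m. \<exists>K. finite K \<and> \<rho> (F - K) \<subseteq> A m"
    by (rule diagonalizesD[OF P(3) \<open>decseq A\<close> A_mem]) blast
  then show ?thesis unfolding A_def by (rule mem_LambdaI_balls)
qed

section \<open>The counterexamples\<close>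

lemma mem_Lambda_if_constant:
  assumes "infinite F" "\<And>s. s \<in> \<rho> F \<Longrightarrow> x s = c"
  shows "c \<in> Lambda \<rho> x"
  unfolding Lambda_def
proof (rule CollectI, rule exI[of _ F], intro conjI allI impI)
  show "infinite F" by (fact assms(1))
  fix U assume "open U \<and> c \<in> U"
  then show "\<exists>K. finite K \<and> (\<forall>s\<in>\<rho> (F - K). x s \<in> U)"
    using assms(2) by (intro exI[of _ "{}"]) simp
qed

lemma mem_Gamma_if_constant_tendsto:
  assumes "y \<longlonglongrightarrow> p" "\<And>n. infinite (F n)" "\<And>n s. s \<in> \<rho> (F n) \<Longrightarrow> x s = y n"
  shows "p \<in> Gamma \<rho> x"
  unfolding Gamma_def
proof (intro CollectI allI impI)
  fix U assume "open U \<and> p \<in> U"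
  then have "eventually (\<lambda>n. y n \<in> U) sequentially"
    using assms(1) topological_tendstoD by blast
  then obtain n where "y n \<in> U" by (meson eventually_sequentially order_refl)
  then have "\<rho> (F n) \<subseteq> {s. x s \<in> U}" using assms(3) by auto
  then show "\<exists>F. infinite F \<and> \<rho> F \<subseteq> {s. x s \<in> U}" using assms(2) by blast
qed

lemma Lambda_ne_Gamma_not_closed:
  assumes "p \<in> Gamma \<rho> x" "p \<notin> Lambda \<rho> x" "\<And>n. y n \<in> Lambda \<rho> x" "y \<longlonglongrightarrow> p"
  shows "Lambda \<rho> x \<noteq> Gamma \<rho> x" "\<not> closed (Lambda \<rho> x)"
proof -
  show "Lambda \<rho> x \<noteq> Gamma \<rho> x" using assms(1,2) by blast
  show "\<not> closed (Lambda \<rho> x)"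
  proof
    assume "closed (Lambda \<rho> x)"
    then have "p \<in> Lambda \<rho> x"
      using Lim_in_closed_set[OF _ _ _ assms(4)] assms(3) by simp
    then show False using assms(2) by contradiction
  qed
qed

(* prod_decode splits nat into the infinitely many infinite rows {i. row i = n}. *)
definition row :: "nat \<Rightarrow> nat" where
  "row i = fst (prod_decode i)"

lemma infinite_row: "infinite {i. row i = n}"
proof -
  have "range (\<lambda>k. prod_encode (n, k)) \<subseteq> {i. row i = n}" by (auto simp: row_def)
  moreover have "infinite (range (\<lambda>k. prod_encode (n, k)))"
    by (rule range_inj_infinite) (simp add: inj_on_def inj_prod_encode[THEN inj_onD])
  ultimately show ?thesis using infinite_super by blast
qed

definition row_value :: "(nat \<Rightarrow> 'a) \<Rightarrow> 'a \<Rightarrow> nat set \<Rightarrow> 'a" where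
  "row_value y z S = (if S \<noteq> {} \<and> (\<forall>i\<in>S. row i = row (Min S)) then y (row (Min S)) else z)"

lemma row_value_row:
  assumes "finite S" "S \<noteq> {}" "S \<subseteq> {i. row i = n}"
  shows "row_value y z S = y n"
proof -
  have "Min S \<in> S" using assms(1,2) by simp
  then have "row (Min S) = n" using assms(3) by blast
  then show ?thesis using assms(2,3) by (auto simp: row_value_def)
qed

lemma row_value_neqE:
  assumes "row_value y z S \<noteq> z"
  obtains n where "S \<noteq> {}" "S \<subseteq> {i. row i = n}" "row_value y z S = y n"
  using assms that by (auto simp: row_value_def split: if_splits)

lemma infinite_Diff_finiteE:
  assumes "infinite F" "finite K"
  obtains a where "a \<in> F" "a \<notin> K"
  using assms infinite_imp_nonempty[OF Diff_infinite_finite[OF assms(2,1)]] by blast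

lemma mem_Lambda_avoidsE:
  fixes p :: "'a::t1_space"
  assumes "p \<in> Lambda \<rho> x"
  obtains F where "infinite F" "\<And>z. z \<noteq> p \<Longrightarrow> \<exists>K. finite K \<and> (\<forall>s\<in>\<rho> (F - K). x s \<noteq> z)"
proof -
  obtain F where F: "infinite F"
    "\<And>U. open U \<Longrightarrow> p \<in> U \<Longrightarrow> \<exists>K. finite K \<and> (\<forall>s\<in>\<rho> (F - K). x s \<in> U)"
    using assms(1) unfolding Lambda_def by blast
  have "\<exists>K. finite K \<and> (\<forall>s\<in>\<rho> (F - K). x s \<noteq> z)" if "z \<noteq> p" for z
    using F(2)[of "- {z}"] that by (auto simp: open_Compl)
  then show ?thesis using F(1) that by blast
qed

lemma pairs_row_value_not_mem_Lambda:
  fixes p z :: "'a::t1_space"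
  assumes z: "z \<noteq> p" and y: "\<And>n. y n \<noteq> p"
  shows "p \<notin> Lambda pairs (row_value y z)"
proof
  let ?x = "row_value y z"
  have pair: "{a, b} \<in> pairs (F - K)" if "a \<in> F" "a \<notin> K" "b \<in> F" "b \<notin> K" "a \<noteq> b" for a b F K
    using that by (auto simp: pairs_def)
  have same_row: "row a = row b \<and> ?x {a, b} = y (row a)" if neq: "?x {a, b} \<noteq> z" for a b
  proof -
    obtain n where "{a, b} \<noteq> {}" "{a, b} \<subseteq> {i. row i = n}" "?x {a, b} = y n"
      using neq by (rule row_value_neqE)
    then show ?thesis by simp
  qed
  assume "p \<in> Lambda pairs ?x"
  then obtain F where F: "infinite F"
    "\<And>z. z \<noteq> p \<Longrightarrow> \<exists>K. finite K \<and> (\<forall>s\<in>pairs (F - K). ?x s \<noteq> z)"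
    by (rule mem_Lambda_avoidsE) blast
  obtain K1 where K1: "finite K1" "\<And>s. s \<in> pairs (F - K1) \<Longrightarrow> ?x s \<noteq> z"
    using F(2)[OF z] by blast
  obtain a where a: "a \<in> F" "a \<notin> K1" using infinite_Diff_finiteE[OF F(1) K1(1)] .
  obtain K2 where K2: "finite K2" "\<And>s. s \<in> pairs (F - K2) \<Longrightarrow> ?x s \<noteq> y (row a)"
    using F(2)[OF y[of "row a"]] by blast
  have "finite (K1 \<union> K2 \<union> {a})" using K1(1) K2(1) by simp
  then obtain b where b: "b \<in> F" "b \<notin> K1 \<union> K2 \<union> {a}"
    by (rule infinite_Diff_finiteE[OF F(1)])
  have "finite (K1 \<union> K2 \<union> {a, b})" using K1(1) K2(1) by simp
  then obtain c where c: "c \<in> F" "c \<notin> K1 \<union> K2 \<union> {a, b}"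
    by (rule infinite_Diff_finiteE[OF F(1)])
  have "{a, b} \<in> pairs (F - K1)" by (rule pair) (use a b in auto)
  then have "row a = row b" using same_row K1(2) by blast
  have "{b, c} \<in> pairs (F - K1)" by (rule pair) (use b c in auto)
  then have "?x {b, c} = y (row b)" using same_row K1(2) by blast
  moreover have "{b, c} \<in> pairs (F - K2)" by (rule pair) (use b c in auto)
  then have "?x {b, c} \<noteq> y (row a)" by (rule K2(2))
  ultimately show False using \<open>row a = row b\<close> by simp
qed

lemma pairs_counterexample:
  fixes p z :: "'a::t1_space"
  assumes z: "z \<noteq> p" and y: "\<And>n. y n \<noteq> p" "y \<longlonglongrightarrow> p"
  shows "p \<in> Gamma pairs (row_value y z)" "p \<notin> Lambda pairs (row_value y z)"
    "\<And>n. y n \<in> Lambda pairs (row_value y z)"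
proof -
  have row_pairs: "row_value y z s = y n" if "s \<in> pairs {i. row i = n}" for s n
  proof -
    have "finite s" "s \<noteq> {}" "s \<subseteq> {i. row i = n}"
      using that by (auto simp: pairs_def intro: card_ge_0_finite)
    then show ?thesis by (rule row_value_row)
  qed
  show "p \<in> Gamma pairs (row_value y z)"
    using y(2) infinite_row row_pairs by (rule mem_Gamma_if_constant_tendsto)
  show "y n \<in> Lambda pairs (row_value y z)" for n
    using infinite_row row_pairs by (rule mem_Lambda_if_constant)
  show "p \<notin> Lambda pairs (row_value y z)" using z y(1) by (rule pairs_row_value_not_mem_Lambda)
qed

lemma set_decode_add:
  assumes "set_decode a \<inter> set_decode b = {}"
  shows "set_decode (a + b) = set_decode a \<union> set_decode b"
proof -
  have "set_encode (set_decode a \<union> set_decode b) = set_encode (set_decode a) + set_encode (set_decode b)"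
    unfolding set_encode_def using assms by (simp add: sum.union_disjoint)
  then have "set_encode (set_decode a \<union> set_decode b) = a + b" by simp
  then show ?thesis by (metis finite_Un finite_set_decode set_encode_inverse)
qed

lemma set_decode_add_same_row:
  assumes a: "set_decode a \<noteq> {}" "set_decode a \<subseteq> {i. row i = n}"
    and b: "set_decode b \<noteq> {}" "set_decode b \<subseteq> {i. row i = m}"
    and ab: "set_decode (a + b) \<subseteq> {i. row i = k}"
  shows "m = n"
proof (rule ccontr)
  assume "m \<noteq> n"
  then have "set_decode a \<inter> set_decode b = {}" using a(2) b(2) by blast
  then have "set_decode a \<union> set_decode b \<subseteq> {i. row i = k}" using ab by (simp add: set_decode_add)
  then show False using a b \<open>m \<noteq> n\<close> by blast
qed

lemma FS_powers_of_two:

  assumes "s \<in> FS ((\<lambda>i. 2 ^ i) ` A)"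
  shows "set_decode s \<noteq> {}" "set_decode s \<subseteq> A"
proof -
  obtain g where g: "g \<subseteq> (\<lambda>i. 2 ^ i) ` A" "finite g" "g \<noteq> {}" "s = \<Sum>g" using assms by (rule FS_E)
  then obtain a where a: "a \<subseteq> A" "g = (\<lambda>i. 2 ^ i) ` a" by (auto simp: subset_image_iff)
  have inj: "inj (\<lambda>i::nat. (2::nat) ^ i)" by (simp add: inj_on_def)
  have "finite a" using g(2) a(2) inj by (simp add: finite_image_iff inj_on_subset)
  moreover have "s = set_encode a" using g(4) a(2) inj
    by (simp add: set_encode_def sum.reindex inj_on_subset)
  ultimately have "set_decode s = a" by simp
  then show "set_decode s \<noteq> {}" "set_decode s \<subseteq> A" using g(3) a by auto
qed

lemma FS_row_value_not_mem_Lambda: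
  fixes p z :: "'a::t1_space"
  assumes z: "z \<noteq> p" and y: "\<And>n. y n \<noteq> p"
  shows "p \<notin> Lambda FS (\<lambda>s. row_value y z (set_decode s))"
proof
  let ?x = "\<lambda>s. row_value y z (set_decode s)"
  have row_of: "\<exists>n. set_decode s \<noteq> {} \<and> set_decode s \<subseteq> {i. row i = n} \<and> ?x s = y n"
    if neq: "?x s \<noteq> z" for s
  proof -
    obtain n where "set_decode s \<noteq> {}" "set_decode s \<subseteq> {i. row i = n}" "?x s = y n"
      using neq by (rule row_value_neqE)
    then show ?thesis by blast
  qed
  assume "p \<in> Lambda FS ?x"
  then obtain F where F: "infinite F"
    "\<And>z. z \<noteq> p \<Longrightarrow> \<exists>K. finite K \<and> (\<forall>s\<in>FS (F - K). ?x s \<noteq> z)"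
    by (rule mem_Lambda_avoidsE) blast
  obtain K1 where K1: "finite K1" "\<And>s. s \<in> FS (F - K1) \<Longrightarrow> ?x s \<noteq> z"
    using F(2)[OF z] by blast
  obtain a where a: "a \<in> F" "a \<notin> K1" using infinite_Diff_finiteE[OF F(1) K1(1)] .
  have "a \<in> FS (F - K1)" using a subset_FS[of "F - K1"] by blast
  then obtain n where n: "set_decode a \<noteq> {}" "set_decode a \<subseteq> {i. row i = n}"
    using row_of K1(2) by blast
  obtain K2 where K2: "finite K2" "\<And>s. s \<in> FS (F - K2) \<Longrightarrow> ?x s \<noteq> y n"
    using F(2)[OF y[of n]] by blast
  have "finite (K1 \<union> K2 \<union> {a})" using K1(1) K2(1) by simp
  then obtain b where b: "b \<in> F" "b \<notin> K1 \<union> K2 \<union> {a}"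
    by (rule infinite_Diff_finiteE[OF F(1)])
  have "b \<in> FS (F - K1)" using b subset_FS[of "F - K1"] by blast
  then obtain m where m: "set_decode b \<noteq> {}" "set_decode b \<subseteq> {i. row i = m}" "?x b = y m"
    using row_of K1(2) by blast
  have "a + b \<in> FS (F - K1)"
    unfolding mem_FS_iff using a b by (intro exI[of _ "{a, b}"]) auto
  then obtain k where "set_decode (a + b) \<subseteq> {i. row i = k}" using row_of K1(2) by blast
  then have "m = n" using n m(1,2) by (intro set_decode_add_same_row)
  moreover have "b \<in> FS (F - K2)" using b subset_FS[of "F - K2"] by blast
  then have "?x b \<noteq> y n" by (rule K2(2))
  ultimately show False using m(3) by simp
qed

lemma FS_counterexample:
  fixes p z :: "'a::t1_space"
  assumes z: "z \<noteq> p" and y: "\<And>n. y n \<noteq> p" "y \<longlonglongrightarrow> p"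
  shows "p \<in> Gamma FS (\<lambda>s. row_value y z (set_decode s))"
    "p \<notin> Lambda FS (\<lambda>s. row_value y z (set_decode s))"
    "\<And>n. y n \<in> Lambda FS (\<lambda>s. row_value y z (set_decode s))"
proof -
  define B where "B n = (\<lambda>i. (2::nat) ^ i) ` {i. row i = n}" for n
  have B_infinite: "infinite (B n)" for n
    using infinite_row unfolding B_def by (simp add: finite_image_iff inj_on_def)
  have FS_B: "row_value y z (set_decode s) = y n" if "s \<in> FS (B n)" for s n
    using FS_powers_of_two[OF that[unfolded B_def]] by (simp add: row_value_row)
  show "p \<in> Gamma FS (\<lambda>s. row_value y z (set_decode s))"
    using y(2) B_infinite FS_B by (rule mem_Gamma_if_constant_tendsto)
  show "y n \<in> Lambda FS (\<lambda>s. row_value y z (set_decode s))" for n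
    using B_infinite FS_B by (rule mem_Lambda_if_constant)
  show "p \<notin> Lambda FS (\<lambda>s. row_value y z (set_decode s))"
    using z y(1) by (rule FS_row_value_not_mem_Lambda)
qed

theorem corollary3p4:
  fixes p :: "'a::metric_space"
  assumes "p islimpt (UNIV :: 'a set)"
  shows "(\<exists>x :: nat set \<Rightarrow> 'a. Lambda pairs x \<noteq> Gamma pairs x)
       \<and> (\<exists>x :: nat set \<Rightarrow> 'a. \<not> closed (Lambda pairs x))
       \<and> (locally_compact_space (euclidean :: 'a topology) \<longrightarrow>
            (\<forall>x :: nat set \<Rightarrow> 'a. \<forall>\<eta>. \<eta> isolated_in Gamma pairs x \<longrightarrow> \<eta> \<in> Lambda pairs x))
       \<and> (\<exists>x :: nat \<Rightarrow> 'a. Lambda FS x \<noteq> Gamma FS x)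
       \<and> (\<exists>x :: nat \<Rightarrow> 'a. \<not> closed (Lambda FS x))
       \<and> (locally_compact_space (euclidean :: 'a topology) \<longrightarrow>
            (\<forall>x :: nat \<Rightarrow> 'a. \<forall>\<eta>. \<eta> isolated_in Gamma FS x \<longrightarrow> \<eta> \<in> Lambda FS x))"
proof -
  obtain y where y: "\<And>n. y n \<noteq> p" "y \<longlonglongrightarrow> p"
    using assms unfolding islimpt_sequential by auto
  note pairs_example = pairs_counterexample[OF y(1)[of 0] y]
  note FS_example = FS_counterexample[OF y(1)[of 0] y]
  have pairs_isolated: "\<eta> \<in> Lambda pairs x"
    if "locally_compact_space (euclidean :: 'a topology)" "\<eta> isolated_in Gamma pairs x"
    for x :: "nat set \<Rightarrow> 'a" and \<eta>
    by (rule isolated_in_Gamma_imp_Lambda[OF that(2,1) pairs_diagonalizing_ultrafilter])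
  have FS_isolated: "\<eta> \<in> Lambda FS x"
    if "locally_compact_space (euclidean :: 'a topology)" "\<eta> isolated_in Gamma FS x"
    for x :: "nat \<Rightarrow> 'a" and \<eta>
    by (rule isolated_in_Gamma_imp_Lambda[OF that(2,1) FS_diagonalizing_ultrafilter])
  show ?thesis
    using Lambda_ne_Gamma_not_closed[OF pairs_example y(2)]
      Lambda_ne_Gamma_not_closed[OF FS_example y(2)] pairs_isolated FS_isolated
    by blast
qed

end
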